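(* Let $\mathcal A_+,\mathcal A_-\subseteq\mathbb Z^n$ be disjoint finite sets, $\mathcal A=\mathcal A_+\cup\mathcal A_-$, with $\mathcal A_-\neq\varnothing$ and $\mathcal A_-\subseteq\operatorname{relint}(\operatorname{conv}(\mathcal A_+))$. Let $f\in\mathcal S(\mathcal A_+,\mathcal A_-)$ have nonsigned coefficients $c\in\mathbb R^{\mathcal A}_{>0}$, let $F$ be the critical system of $(\mathcal A_+,\mathcal A_-)$ and $h:\mathcal A\to\mathbb Z$ a height function lifting $\mathcal A_-$. Let $S:=\{t\in\mathbb R_{>0}: F(c\star t^h,x)=0\text{ for some }x\in\mathbb R^n_{>0}\}$. Then (i) $S$ has a minimum $t_*$, and (ii) $f$ is copositive if and only if $t_*\ge1$.
   Context: For disjoint finite $\mathcal A_+,\mathcal A_-\subseteq\mathbb R^n$, a signomial with signed support $(\mathcal A_+,\mathcal A_-)$ is a function $f:\mathbb R^n_{>0}\to\mathbb R$, $f(x)=\sum_{a\in\mathcal A_+}c_ax^a-\sum_{b\in\mathcal A_-}c_bx^b$ with all $c_a,c_b>0$ (the nonsigned coefficients). $\mathcal S(\mathcal A_+,\mathcal A_-)$ is the set of such signomials, identified with $\mathbb R^{\mathcal A}_{>0}$; $f_c$ denotes the signomial with nonsigned coefficients $c$. $f$ is copositive if $f\ge0$ on $\mathbb R^n_{>0}$. The critical system of $(\mathcal A_+,\mathcal A_-)$ is $F(c,x)=(f_c(x),x_1\partial_{x_1}f_c(x),\dots,x_n\partial_{x_n}f_c(x))$. A height function $h:\mathcal A\to\mathbb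 Z$ lifts $\mathcal A_-$ if $h(a)>0$ for $a\in\mathcal A_-$ and $h(a)=0$ for $a\in\mathcal A_+$; $c\star t^h=(c_at^{h(a)})_{a\in\mathcal A}$. *)

theory Defs
  imports "HOL-Analysis.Analysis"
begin

definition mon :: "real ^ 'n \<Rightarrow> int ^ 'n \<Rightarrow> real" where
  "mon x a = (\<Prod>i\<in>UNIV. (x $ i) powi (a $ i))"

definition pos_orthant :: "(real ^ 'n) set" where
  "pos_orthant = {x. \<forall>i. 0 < x $ i}"

definition signomial :: "(int ^ 'n) set \<Rightarrow> (int ^ 'n) set \<Rightarrow> (int ^ 'n \<Rightarrow> real) \<Rightarrow> real ^ 'n \<Rightarrow> real" where
  "signomial Ap Am c x = (\<Sum>a\<in>Ap. c a * mon x a) - (\<Sum>b\<in>Am. c b * mon x b)"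

definition copositive_on_orthant :: "(real ^ 'n \<Rightarrow> real) \<Rightarrow> bool" where
  "copositive_on_orthant f \<longleftrightarrow> (\<forall>x\<in>pos_orthant. 0 \<le> f x)"

definition real_vec :: "int ^ 'n \<Rightarrow> real ^ 'n" where
  "real_vec a = (\<chi> i. real_of_int (a $ i))"

definition partial :: "(real ^ 'n \<Rightarrow> real) \<Rightarrow> 'n \<Rightarrow> real ^ 'n \<Rightarrow> real" where
  "partial g i x = deriv (\<lambda>s. g (\<chi> j. if j = i then s else x $ j)) (x $ i)"

definition critical_zero :: "(int ^ 'n) set \<Rightarrow> (int ^ 'n) set \<Rightarrow> (int ^ 'n \<Rightarrow> real) \<Rightarrow> real ^ 'n \<Rightarrow> bool" where
  "critical_zero Ap Am c x \<longleftrightarrow>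
     signomial Ap Am c x = 0 \<and> (\<forall>i. x $ i * partial (signomial Ap Am c) i x = 0)"

definition star_pow :: "(int ^ 'n \<Rightarrow> real) \<Rightarrow> real \<Rightarrow> (int ^ 'n \<Rightarrow> int) \<Rightarrow> int ^ 'n \<Rightarrow> real" where
  "star_pow c t h = (\<lambda>a. c a * t powi h a)"

end

theory Submission
  imports Defs
begin

text \<open>In logarithmic coordinates \<open>x = exp y\<close> the signomial with coefficients \<open>c \<star> t^h\<close> becomes
  \<open>logsig t y = (\<Sum>a\<in>A\<^sub>+. c a e^(a\<bullet>y)) - (\<Sum>b\<in>A\<^sub>-. c b t^(h b) e^(b\<bullet>y))\<close>, which is positive for
  \<open>t = 0\<close> and strictly decreasing in \<open>t \<ge> 0\<close>. Every \<open>b \<in> A\<^sub>-\<close> is a convex combination of \<open>A\<^sub>+\<close>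
  with weights bounded below by some \<open>mu > 0\<close>, so \<open>logsig t y \<le> 0\<close> with \<open>t\<close> bounded forces the
  numbers \<open>a\<bullet>y\<close>, \<open>a \<in> A\<^sub>+\<close>, to have bounded spread. Along directions orthogonal to the affine span
  of the support, \<open>logsig t\<close> is merely rescaled by a positive factor; hence its nonpositivity
  region can be searched in a compact set, and there is a least \<open>t\<close> (the \<open>threshold\<close>) at which
  \<open>logsig t\<close> takes a nonpositive value. By continuity \<open>logsig threshold \<ge> 0\<close> with a zero, which is
  a global minimum and so a critical point, while \<open>logsig t > 0\<close> for smaller \<open>t\<close>. Thus the
  threshold is \<open>min S\<close>, and \<open>f = f\<^bsub>c \<star> 1^h\<^esub>\<close> is copositive iff the threshold is at least \<open>1\<close>.\<close>

definition exp_vec :: "real ^ 'n \<Rightarrow> real ^ 'n" where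
  "exp_vec y = (\<chi> i. exp (y $ i))"

lemma mon_exp_vec: "mon (exp_vec y) a = exp (real_vec a \<bullet> y)"
  unfolding mon_def exp_vec_def real_vec_def inner_vec_def
  by (simp add: exp_power_int exp_sum)

lemma pos_orthant_eq_range_exp_vec: "pos_orthant = range exp_vec"
proof (intro equalityI subsetI)
  fix x :: "real ^ 'n"
  assume "x \<in> pos_orthant"
  then have "x = exp_vec (\<chi> i. ln (x $ i))"
    by (simp add: exp_vec_def pos_orthant_def vec_eq_iff)
  then show "x \<in> range exp_vec" by blast
qed (auto simp: exp_vec_def pos_orthant_def)

lemma differentiable_prod:
  fixes f :: "'i \<Rightarrow> real \<Rightarrow> real"
  assumes "finite I" and "\<And>i. i \<in> I \<Longrightarrow> f i differentiable at s"
  shows "(\<lambda>s. \<Prod>i\<in>I. f i s) differentiable at s"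
  using assms by (induction I rule: finite_induct) auto

lemma signomial_differentiable_along:
  assumes "finite Ap" and "finite Am" and "0 < s"
  shows "(\<lambda>s. signomial Ap Am c (\<chi> j. if j = i then s else x $ j)) differentiable at s"
proof -
  have "(\<lambda>s. mon (\<chi> j. if j = i then s else x $ j) a) differentiable at s" for a
    unfolding mon_def
  proof (rule differentiable_prod)
    fix j
    show "(\<lambda>s. (\<chi> j. if j = i then s else x $ j) $ j powi a $ j) differentiable at s"
      using \<open>0 < s\<close> by (cases "j = i") simp_all
  qed simp
  then show ?thesis
    unfolding signomial_def using assms by (intro differentiable_diff differentiable_sum) auto
qed

lemma partial_eq_0_at_min_on_pos_orthant:
  fixes g :: "real ^ 'n \<Rightarrow> real"
  assumes x: "x \<in> pos_orthant" and min: "\<forall>x'\<in>pos_orthant. g x \<le> g x'"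
    and diff: "(\<lambda>s. g (\<chi> j. if j = i then s else x $ j)) differentiable at (x $ i)"
  shows "partial g i x = 0"
proof -
  let ?p = "\<lambda>s. g (\<chi> j. if j = i then s else x $ j)"
  have xi: "0 < x $ i" using x by (simp add: pos_orthant_def)
  have "?p (x $ i) \<le> ?p s" if "\<bar>x $ i - s\<bar> < x $ i" for s
  proof -
    have "(\<chi> j. if j = i then s else x $ j) \<in> pos_orthant"
      using x that by (auto simp: pos_orthant_def)
    moreover have "(\<chi> j. if j = i then x $ i else x $ j) = x" by (simp add: vec_eq_iff)
    ultimately show ?thesis using min by (metis (no_types, lifting))
  qed
  then have "deriv ?p (x $ i) = 0"
    using DERIV_local_min[OF _ xi] diff DERIV_deriv_iff_real_differentiable by blast
  then show ?thesis unfolding partial_def .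
qed

lemma critical_zero_at_zero_minimum:
  assumes "finite Ap" and "finite Am" and x: "x \<in> pos_orthant"
    and zero: "signomial Ap Am c x = 0" and cop: "copositive_on_orthant (signomial Ap Am c)"
  shows "critical_zero Ap Am c x"
  unfolding critical_zero_def
proof (intro conjI allI)
  fix i
  have "0 < x $ i" using x by (simp add: pos_orthant_def)
  then have "partial (signomial Ap Am c) i x = 0"
    using cop zero assms(1,2) unfolding copositive_on_orthant_def
    by (intro partial_eq_0_at_min_on_pos_orthant[OF x] signomial_differentiable_along) auto
  then show "x $ i * partial (signomial Ap Am c) i x = 0" by simp
qed (fact zero)

lemma rel_interior_convex_hull_image_weights:
  fixes f :: "'a \<Rightarrow> 'n::euclidean_space"
  assumes "finite A" and "z \<in> rel_interior (convex hull (f ` A))"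
  obtains u where "\<forall>a\<in>A. 0 < u a" and "sum u A = 1" and "(\<Sum>a\<in>A. u a *\<^sub>R f a) = z"
proof -
  have "f ` A = (\<Union>a\<in>A. {f a})" by blast
  then have "z \<in> rel_interior (convex hull (\<Union>a\<in>A. {f a}))" using assms(2) by simp
  then show ?thesis
    using that by (subst (asm) rel_interior_convex_hull_union) (use assms(1) in auto)
qed

lemma weighted_mean_le_max_minus:
  fixes v lam :: "'a \<Rightarrow> real"
  assumes "finite A" and "0 \<le> mu" and "\<forall>a\<in>A. mu \<le> lam a" and "sum lam A = 1"
    and "\<forall>a\<in>A. v a \<le> M" and "a' \<in> A"
  shows "(\<Sum>a\<in>A. lam a * v a) \<le> M - mu * (M - v a')"
proof -
  have "(\<Sum>a\<in>A. lam a * v a) = M - (\<Sum>a\<in>A. lam a * (M - v a))"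
    using assms(4) by (simp add: right_diff_distrib sum_subtractf flip: sum_distrib_right)
  also have "lam a' * (M - v a') \<le> (\<Sum>a\<in>A. lam a * (M - v a))"
    using assms by (intro member_le_sum) (auto intro: order_trans)
  moreover have "mu * (M - v a') \<le> lam a' * (M - v a')"
    using assms by (intro mult_right_mono) auto
  ultimately show ?thesis by linarith
qed

lemma exp_sum_dominated_spread_le:
  fixes v c :: "'a \<Rightarrow> real" and w d :: "'b \<Rightarrow> real"
  assumes "finite A" and "finite B" and "0 < mu" and "0 < cmin"
    and weights: "\<forall>b\<in>B. (\<forall>a\<in>A. mu \<le> lam b a) \<and> sum (lam b) A = 1 \<and> w b = (\<Sum>a\<in>A. lam b a * v a)"
    and c: "\<forall>a\<in>A. cmin \<le> c a" and d: "\<forall>b\<in>B. 0 \<le> d b" and C: "(\<Sum>b\<in>B. d b) \<le> C"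
    and dominated: "(\<Sum>a\<in>A. c a * exp (v a)) \<le> (\<Sum>b\<in>B. d b * exp (w b))"
    and "a \<in> A" and "a' \<in> A"
  shows "v a - v a' \<le> ln (C / cmin) / mu"
proof -
  txt \<open>The largest term on the left is at least \<open>cmin * exp M\<close>, while every exponent on the right
    lies at least \<open>mu * (M - v a')\<close> below the maximum \<open>M\<close>.\<close>
  define M where "M = Max (v ` A)"
  have "M \<in> v ` A" unfolding M_def using \<open>finite A\<close> \<open>a \<in> A\<close> by (intro Max_in) auto
  then obtain amax where amax: "amax \<in> A" "v amax = M" by auto
  have le_M: "\<forall>x\<in>A. v x \<le> M" using \<open>finite A\<close> unfolding M_def by simp
  define X where "X = mu * (M - v a')"
  have w_le: "w b \<le> M - X" if "b \<in> B" for b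
    using weights that le_M \<open>0 < mu\<close> \<open>a' \<in> A\<close> \<open>finite A\<close>
    unfolding X_def by (auto intro!: weighted_mean_le_max_minus)
  have "cmin * exp M \<le> c amax * exp (v amax)"
    using c amax by simp
  also have "\<dots> \<le> (\<Sum>a\<in>A. c a * exp (v a))"
    using amax c \<open>finite A\<close> \<open>0 < cmin\<close> by (intro member_le_sum) (auto intro: order_trans)
  also have "\<dots> \<le> (\<Sum>b\<in>B. d b * exp (M - X))"
    using dominated w_le d by (auto intro!: sum_mono mult_left_mono order_trans[OF dominated])
  also have "\<dots> \<le> C * exp (M - X)"
    using C by (simp flip: sum_distrib_right)
  finally have "cmin * exp X \<le> C"
    by (simp add: exp_diff divide_simps mult.commute)
  then have "exp X \<le> C / cmin"
    using \<open>0 < cmin\<close> by (simp add: field_simps)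
  then have "mu * (M - v a') \<le> ln (C / cmin)"
    unfolding X_def
    by (metis exp_gt_zero ln_exp ln_le_cancel_iff order_less_le_trans)
  then have "M - v a' \<le> ln (C / cmin) / mu"
    using \<open>0 < mu\<close> by (simp add: field_simps)
  then show ?thesis
    using le_M \<open>a \<in> A\<close> by fastforce
qed

lemma bounded_span_inner_le:
  fixes D :: "'a::euclidean_space set"
  assumes "finite D"
  shows "bounded {y \<in> span D. \<forall>d\<in>D. \<bar>d \<bullet> y\<bar> \<le> K}"
proof -
  txt \<open>\<open>G\<close> is injective on \<open>span D\<close>, hence bounded below there.\<close>
  define G where "G y = (\<Sum>d\<in>D. (d \<bullet> y) *\<^sub>R d)" for y
  have "bounded_linear G" unfolding G_def by (intro bounded_linear_intros)
  moreover have "y = 0" if "y \<in> span D" "G y = 0" for y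
  proof -
    have "y \<bullet> G y = (\<Sum>d\<in>D. (d \<bullet> y)\<^sup>2)"
      unfolding G_def by (simp add: inner_sum_right power2_eq_square inner_commute)
    then have "\<forall>d\<in>D. orthogonal y d"
      using \<open>G y = 0\<close> \<open>finite D\<close> by (simp add: sum_nonneg_eq_0_iff orthogonal_def inner_commute)
    then show "y = 0" using orthogonal_to_span[OF \<open>y \<in> span D\<close>, of y] by (simp add: orthogonal_def)
  qed
  ultimately obtain e where "e > 0" and e: "\<forall>y\<in>span D. e * norm y \<le> norm (G y)"
    using injective_imp_isometric[OF closed_span subspace_span] by metis
  have "norm y \<le> K * (\<Sum>d\<in>D. norm d) / e"
    if "y \<in> span D" and K: "\<forall>d\<in>D. \<bar>d \<bullet> y\<bar> \<le> K" for y
  proof -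
    have "e * norm y \<le> (\<Sum>d\<in>D. \<bar>d \<bullet> y\<bar> * norm d)"
      using e that norm_sum[of "\<lambda>d. (d \<bullet> y) *\<^sub>R d" D] unfolding G_def by force
    also have "\<dots> \<le> (\<Sum>d\<in>D. K * norm d)"
      using K by (intro sum_mono mult_right_mono) auto
    finally show ?thesis
      using \<open>e > 0\<close> by (simp add: field_simps sum_distrib_left)
  qed
  then show ?thesis unfolding bounded_iff by blast
qed

locale lifted_signomial =
  fixes Ap Am :: "(int ^ 'n) set" and c :: "int ^ 'n \<Rightarrow> real" and h :: "int ^ 'n \<Rightarrow> int"
  assumes finite_Ap: "finite Ap" and finite_Am: "finite Am" and Am_nonempty: "Am \<noteq> {}"
    and Am_rel_interior: "real_vec ` Am \<subseteq> rel_interior (convex hull (real_vec ` Ap))"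
    and c_pos: "\<forall>a\<in>Ap \<union> Am. 0 < c a"
    and h_Am: "\<forall>a\<in>Am. 0 < h a" and h_Ap: "\<forall>a\<in>Ap. h a = 0"
begin

text \<open>\<open>t ^ nat (h b)\<close> agrees with \<open>t powi h b\<close> because \<open>h b > 0\<close>, and is evidently continuous in \<open>t\<close>,
  also at \<open>t = 0\<close>.\<close>
definition logsig :: "real \<Rightarrow> real ^ 'n \<Rightarrow> real" where
  "logsig t y = (\<Sum>a\<in>Ap. c a * exp (real_vec a \<bullet> y))
     - (\<Sum>b\<in>Am. c b * t ^ nat (h b) * exp (real_vec b \<bullet> y))"

lemma signomial_star_pow_exp_vec: "signomial Ap Am (star_pow c t h) (exp_vec y) = logsig t y"
proof -
  have "star_pow c t h a = c a" if "a \<in> Ap" for a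
    using h_Ap that by (simp add: star_pow_def)
  moreover have "star_pow c t h b = c b * t ^ nat (h b)" if "b \<in> Am" for b
  proof -
    have "0 < h b" using h_Am that by blast
    then show ?thesis by (simp add: star_pow_def power_int_def)
  qed
  ultimately show ?thesis
    unfolding signomial_def logsig_def mon_exp_vec by (simp cong: sum.cong)
qed

lemma continuous_on_logsig: "continuous_on UNIV (\<lambda>p. logsig (fst p) (snd p))"
  unfolding logsig_def by (intro continuous_intros)

lemma Ap_nonempty: "Ap \<noteq> {}"
  using Am_nonempty Am_rel_interior by auto

lemma logsig_0_pos: "0 < logsig 0 y"
proof -
  have "(\<Sum>b\<in>Am. c b * 0 ^ nat (h b) * exp (real_vec b \<bullet> y)) = 0"
    using h_Am by (intro sum.neutral) auto
  moreover have "0 < (\<Sum>a\<in>Ap. c a * exp (real_vec a \<bullet> y))"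
    using finite_Ap Ap_nonempty c_pos by (intro sum_pos) auto
  ultimately show ?thesis unfolding logsig_def by simp
qed

lemma logsig_strict_antimono:
  assumes "0 \<le> s" and "s < t"
  shows "logsig t y < logsig s y"
proof -
  have "(\<Sum>b\<in>Am. c b * s ^ nat (h b) * exp (real_vec b \<bullet> y))
      < (\<Sum>b\<in>Am. c b * t ^ nat (h b) * exp (real_vec b \<bullet> y))"
    using finite_Am Am_nonempty c_pos h_Am assms by (intro sum_strict_mono) (auto intro: power_strict_mono)
  then show ?thesis unfolding logsig_def by simp
qed

lemma logsig_nonpos_somewhere: "\<exists>T\<ge>0. logsig T 0 \<le> 0"
proof -
  obtain b0 where b0: "b0 \<in> Am" using Am_nonempty by blast
  then have "0 < c b0" using c_pos by blast
  define T where "T = max 1 ((\<Sum>a\<in>Ap. c a) / c b0)"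
  have "(\<Sum>a\<in>Ap. c a) / c b0 \<le> T" unfolding T_def by simp
  then have "(\<Sum>a\<in>Ap. c a) \<le> c b0 * T"
    using \<open>0 < c b0\<close> by (simp add: divide_le_eq mult.commute)
  also have "\<dots> \<le> c b0 * T ^ nat (h b0)"
    using \<open>0 < c b0\<close> h_Am b0 unfolding T_def by (intro mult_left_mono self_le_power) auto
  also have "\<dots> \<le> (\<Sum>b\<in>Am. c b * T ^ nat (h b))"
    using b0 finite_Am c_pos unfolding T_def by (intro member_le_sum) (auto intro: less_imp_le)
  finally have "logsig T 0 \<le> 0" unfolding logsig_def by simp
  moreover have "0 \<le> T" unfolding T_def by simp
  ultimately show ?thesis by blast
qed

lemma uniform_rel_interior_weights:
  obtains lam mu where "0 < mu" and "\<forall>b\<in>Am. (\<forall>a\<in>Ap. mu \<le> lam b a) \<and> sum (lam b) Ap = 1 \<and>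
      (\<Sum>a\<in>Ap. lam b a *\<^sub>R real_vec a) = real_vec b"
proof -
  have "\<forall>b\<in>Am. \<exists>u. (\<forall>a\<in>Ap. 0 < u a) \<and> sum u Ap = 1 \<and> (\<Sum>a\<in>Ap. u a *\<^sub>R real_vec a) = real_vec b"
  proof
    fix b
    assume "b \<in> Am"
    then have "real_vec b \<in> rel_interior (convex hull (real_vec ` Ap))"
      using Am_rel_interior by blast
    then obtain u where "\<forall>a\<in>Ap. 0 < u a" "sum u Ap = 1" "(\<Sum>a\<in>Ap. u a *\<^sub>R real_vec a) = real_vec b"
      by (rule rel_interior_convex_hull_image_weights[OF finite_Ap])
    then show "\<exists>u. (\<forall>a\<in>Ap. 0 < u a) \<and> sum u Ap = 1 \<and> (\<Sum>a\<in>Ap. u a *\<^sub>R real_vec a) = real_vec b"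
      by blast
  qed
  from bchoice[OF this] obtain lam where lam: "\<forall>b\<in>Am. (\<forall>a\<in>Ap. 0 < lam b a) \<and> sum (lam b) Ap = 1 \<and>
      (\<Sum>a\<in>Ap. lam b a *\<^sub>R real_vec a) = real_vec b"
    by blast
  define mu where "mu = Min ((\<lambda>(b, a). lam b a) ` (Am \<times> Ap))"
  have fin: "finite ((\<lambda>(b, a). lam b a) ` (Am \<times> Ap))"
    using finite_Ap finite_Am by simp
  have "0 < mu"
    unfolding mu_def using fin Am_nonempty Ap_nonempty lam by (auto simp: Min_gr_iff)
  moreover have "\<forall>b\<in>Am. \<forall>a\<in>Ap. mu \<le> lam b a"
    unfolding mu_def using fin by (auto intro!: Min_le)
  ultimately show ?thesis using that lam by blast
qed

definition directions :: "(real ^ 'n) set" where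
  "directions = (\<lambda>(a, a'). real_vec a - real_vec a') ` (Ap \<times> Ap)"

lemma finite_directions: "finite directions"
  unfolding directions_def using finite_Ap by simp

lemma diff_in_directions: "a \<in> Ap \<Longrightarrow> a' \<in> Ap \<Longrightarrow> real_vec a - real_vec a' \<in> directions"
  unfolding directions_def by (rule image_eqI[where x = "(a, a')"]) auto

lemma Am_minus_Ap_in_span_directions:
  assumes "b \<in> Am" and "a \<in> Ap"
  shows "real_vec b - real_vec a \<in> span directions"
proof -
  obtain lam mu where "0 < mu" and "\<forall>b\<in>Am. (\<forall>a\<in>Ap. mu \<le> lam b a) \<and> sum (lam b) Ap = 1 \<and>
      (\<Sum>a\<in>Ap. lam b a *\<^sub>R real_vec a) = real_vec b"
    by (rule uniform_rel_interior_weights)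
  then have lam: "sum (lam b) Ap = 1" "(\<Sum>a\<in>Ap. lam b a *\<^sub>R real_vec a) = real_vec b"
    using \<open>b \<in> Am\<close> by auto
  have "(\<Sum>a'\<in>Ap. lam b a' *\<^sub>R (real_vec a' - real_vec a))
      = (\<Sum>a'\<in>Ap. lam b a' *\<^sub>R real_vec a') - (\<Sum>a'\<in>Ap. lam b a') *\<^sub>R real_vec a"
    by (simp add: scaleR_diff_right sum_subtractf scaleR_sum_left)
  also have "\<dots> = real_vec b - real_vec a"
    using lam by simp
  finally have "real_vec b - real_vec a = (\<Sum>a'\<in>Ap. lam b a' *\<^sub>R (real_vec a' - real_vec a))" ..
  also have "\<dots> \<in> span directions"
    using \<open>a \<in> Ap\<close> by (intro span_sum span_scale span_base diff_in_directions)
  finally show ?thesis .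
qed

lemma logsig_shift_orthogonal:
  assumes "\<And>w. w \<in> span directions \<Longrightarrow> orthogonal z w" and "a \<in> Ap"
  shows "logsig t (y + z) = exp (real_vec a \<bullet> z) * logsig t y"
proof -
  have shift: "exp (real_vec e \<bullet> (y + z)) = exp (real_vec a \<bullet> z) * exp (real_vec e \<bullet> y)"
    if "e \<in> Ap \<union> Am" for e
  proof -
    have "real_vec e - real_vec a \<in> span directions"
      using that \<open>a \<in> Ap\<close> Am_minus_Ap_in_span_directions
      by (auto intro: span_base diff_in_directions)
    then have "orthogonal z (real_vec e - real_vec a)"
      using assms(1) by blast
    then have "real_vec e \<bullet> z = real_vec a \<bullet> z"
      by (simp add: orthogonal_def inner_diff_right inner_commute[of _ z])
    then show ?thesis by (simp add: inner_add_right exp_add)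
  qed
  have "(\<Sum>a\<in>Ap. c a * exp (real_vec a \<bullet> (y + z)))
      = exp (real_vec a \<bullet> z) * (\<Sum>a\<in>Ap. c a * exp (real_vec a \<bullet> y))"
    unfolding sum_distrib_left by (rule sum.cong) (simp_all add: shift)
  moreover have "(\<Sum>b\<in>Am. c b * t ^ nat (h b) * exp (real_vec b \<bullet> (y + z)))
      = exp (real_vec a \<bullet> z) * (\<Sum>b\<in>Am. c b * t ^ nat (h b) * exp (real_vec b \<bullet> y))"
    unfolding sum_distrib_left by (rule sum.cong) (simp_all add: shift)
  ultimately show ?thesis
    unfolding logsig_def by (simp add: right_diff_distrib)
qed

lemma spread_bound:
  "\<exists>D. \<forall>t y. 0 \<le> t \<longrightarrow> t \<le> T \<longrightarrow> logsig t y \<le> 0 \<longrightarrow> (\<forall>d\<in>directions. \<bar>d \<bullet> y\<bar> \<le> D)"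
proof -
  obtain lam mu where "0 < mu" and lam: "\<forall>b\<in>Am. (\<forall>a\<in>Ap. mu \<le> lam b a) \<and> sum (lam b) Ap = 1 \<and>
      (\<Sum>a\<in>Ap. lam b a *\<^sub>R real_vec a) = real_vec b"
    by (rule uniform_rel_interior_weights)
  define cmin where "cmin = Min (c ` Ap)"
  have "0 < cmin" unfolding cmin_def using finite_Ap Ap_nonempty c_pos by (simp add: Min_gr_iff)
  have cmin_le: "\<forall>a\<in>Ap. cmin \<le> c a" unfolding cmin_def using finite_Ap by simp
  define C where "C = (\<Sum>b\<in>Am. c b * T ^ nat (h b))"
  define D where "D = ln (C / cmin) / mu"
  have le_D: "(real_vec a - real_vec a') \<bullet> y \<le> D"
    if t: "0 \<le> t" "t \<le> T" and nonpos: "logsig t y \<le> 0" and "a \<in> Ap" "a' \<in> Ap" for t y a a'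
  proof -
    have "real_vec a \<bullet> y - real_vec a' \<bullet> y \<le> ln (C / cmin) / mu"
    proof (rule exp_sum_dominated_spread_le[OF finite_Ap finite_Am \<open>0 < mu\<close> \<open>0 < cmin\<close>,
          where v = "\<lambda>a. real_vec a \<bullet> y" and w = "\<lambda>b. real_vec b \<bullet> y" and d = "\<lambda>b. c b * t ^ nat (h b)"])
      have "real_vec b \<bullet> y = (\<Sum>a\<in>Ap. lam b a * (real_vec a \<bullet> y))" if "b \<in> Am" for b
      proof -
        have "real_vec b \<bullet> y = (\<Sum>a\<in>Ap. lam b a *\<^sub>R real_vec a) \<bullet> y"
          using lam that by simp
        also have "\<dots> = (\<Sum>a\<in>Ap. lam b a * (real_vec a \<bullet> y))"
          by (simp add: inner_sum_left)
        finally show ?thesis .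
      qed
      then show "\<forall>b\<in>Am. (\<forall>a\<in>Ap. mu \<le> lam b a) \<and> sum (lam b) Ap = 1 \<and>
          real_vec b \<bullet> y = (\<Sum>a\<in>Ap. lam b a * (real_vec a \<bullet> y))"
        using lam by blast
      show "(\<Sum>b\<in>Am. c b * t ^ nat (h b)) \<le> C"
        unfolding C_def using c_pos t
        by (intro sum_mono mult_left_mono power_mono) (auto simp: less_imp_le)
      show "(\<Sum>a\<in>Ap. c a * exp (real_vec a \<bullet> y)) \<le> (\<Sum>b\<in>Am. c b * t ^ nat (h b) * exp (real_vec b \<bullet> y))"
        using nonpos unfolding logsig_def by simp
    qed (use c_pos t cmin_le that in \<open>auto simp: less_imp_le\<close>)
    then show ?thesis
      unfolding D_def by (simp add: inner_diff_left)
  qed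
  have "\<bar>d \<bullet> y\<bar> \<le> D" if t: "0 \<le> t" "t \<le> T" "logsig t y \<le> 0" and "d \<in> directions" for t y d
  proof -
    obtain a a' where "a \<in> Ap" "a' \<in> Ap" and d: "d = real_vec a - real_vec a'"
      using \<open>d \<in> directions\<close> unfolding directions_def by auto
    have "d \<bullet> y \<le> D"
      using le_D[OF t \<open>a \<in> Ap\<close> \<open>a' \<in> Ap\<close>] d by simp
    moreover have "- (d \<bullet> y) \<le> D"
      using le_D[OF t \<open>a' \<in> Ap\<close> \<open>a \<in> Ap\<close>] d by (simp add: inner_diff_left)
    ultimately show ?thesis by (simp add: abs_le_iff)
  qed
  then show ?thesis by blast
qed

lemma nonpos_within_compact:
  "\<exists>K. compact K \<and> (\<forall>t y. 0 \<le> t \<longrightarrow> t \<le> T \<longrightarrow> logsig t y \<le> 0 \<longrightarrow> (\<exists>y'\<in>K. logsig t y' \<le> 0))"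
proof -
  obtain D where D: "\<forall>t y. 0 \<le> t \<longrightarrow> t \<le> T \<longrightarrow> logsig t y \<le> 0 \<longrightarrow> (\<forall>d\<in>directions. \<bar>d \<bullet> y\<bar> \<le> D)"
    using spread_bound by blast
  obtain R where R: "\<forall>y\<in>{y \<in> span directions. \<forall>d\<in>directions. \<bar>d \<bullet> y\<bar> \<le> D}. norm y \<le> R"
    using bounded_span_inner_le[OF finite_directions] unfolding bounded_pos by blast
  obtain a where "a \<in> Ap" using Ap_nonempty by blast
  have "\<exists>y'\<in>cball 0 R \<inter> span directions. logsig t y' \<le> 0"
    if "0 \<le> t" "t \<le> T" "logsig t y \<le> 0" for t y
  proof -
    obtain y1 z where y1: "y1 \<in> span directions" and z: "\<And>w. w \<in> span directions \<Longrightarrow> orthogonal z w"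
      and "y = y1 + z"
      using orthogonal_subspace_decomp_exists[of directions y] by blast
    then have "logsig t y = exp (real_vec a \<bullet> z) * logsig t y1"
      using logsig_shift_orthogonal[OF z \<open>a \<in> Ap\<close>] by simp
    then have "logsig t y1 \<le> 0"
      using \<open>logsig t y \<le> 0\<close> by (simp add: mult_le_0_iff)
    moreover have "y1 \<in> cball 0 R"
    proof -
      have "\<forall>d\<in>directions. \<bar>d \<bullet> y1\<bar> \<le> D"
        using D that(1,2) \<open>logsig t y1 \<le> 0\<close> by blast
      then show ?thesis using y1 R by simp
    qed
    ultimately show ?thesis using y1 by blast
  qed
  moreover have "compact (cball 0 R \<inter> span directions)"
    by (simp add: compact_Int_closed closed_span)
  ultimately show ?thesis by blast
qed

lemma threshold_exists:
  "\<exists>t0. 0 \<le> t0 \<and> (\<exists>y. logsig t0 y \<le> 0) \<and> (\<forall>t y. 0 \<le> t \<longrightarrow> logsig t y \<le> 0 \<longrightarrow> t0 \<le> t)"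
proof -
  obtain T where "0 \<le> T" "logsig T 0 \<le> 0" using logsig_nonpos_somewhere by blast
  obtain K where "compact K"
    and K: "\<forall>t y. 0 \<le> t \<longrightarrow> t \<le> T \<longrightarrow> logsig t y \<le> 0 \<longrightarrow> (\<exists>y'\<in>K. logsig t y' \<le> 0)"
    using nonpos_within_compact by blast
  define Z where "Z = ({0..T} \<times> K) \<inter> {p. logsig (fst p) (snd p) \<le> 0}"
  have in_Z: "t \<in> fst ` Z" if t: "0 \<le> t" "t \<le> T" "logsig t y \<le> 0" for t y
  proof -
    obtain y' where "y' \<in> K" "logsig t y' \<le> 0" using K t by blast
    then have "(t, y') \<in> Z" unfolding Z_def using t by simp
    then show ?thesis by (metis fst_conv image_eqI)
  qed
  have "compact (fst ` Z)"
    unfolding Z_def using \<open>compact K\<close>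
    by (intro compact_continuous_image continuous_intros compact_Int_closed compact_Times
        compact_Icc closed_Collect_le continuous_on_logsig continuous_on_const)
  moreover have "fst ` Z \<noteq> {}"
    using in_Z[OF \<open>0 \<le> T\<close> order_refl \<open>logsig T 0 \<le> 0\<close>] by blast
  ultimately obtain t0 where "t0 \<in> fst ` Z" and min: "\<forall>t\<in>fst ` Z. t0 \<le> t"
    using compact_attains_inf by blast
  then obtain y0 where "0 \<le> t0" "t0 \<le> T" "logsig t0 y0 \<le> 0"
    unfolding Z_def by auto
  have least: "t0 \<le> t" if "0 \<le> t" "logsig t y \<le> 0" for t y
  proof (cases "t \<le> T")
    case True
    then show ?thesis using in_Z that min by blast
  next
    case False
    then show ?thesis using \<open>t0 \<le> T\<close> by simp
  qed
  show ?thesis using \<open>0 \<le> t0\<close> \<open>logsig t0 y0 \<le> 0\<close> least by blast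
qed


definition threshold :: real where
  "threshold = (LEAST t. 0 \<le> t \<and> (\<exists>y. logsig t y \<le> 0))"

lemma threshold_least:
  shows threshold_nonneg: "0 \<le> threshold"
    and logsig_threshold_nonpos: "\<exists>y. logsig threshold y \<le> 0"
    and threshold_le: "\<And>t y. 0 \<le> t \<Longrightarrow> logsig t y \<le> 0 \<Longrightarrow> threshold \<le> t"
proof -
  obtain t0 where t0: "0 \<le> t0" "\<exists>y. logsig t0 y \<le> 0"
    and least: "\<forall>t y. 0 \<le> t \<longrightarrow> logsig t y \<le> 0 \<longrightarrow> t0 \<le> t"
    using threshold_exists by blast
  have "threshold = t0"
    unfolding threshold_def using t0 least by (intro Least_equality) auto
  then show "0 \<le> threshold" "\<exists>y. logsig threshold y \<le> 0"
    and "\<And>t y. 0 \<le> t \<Longrightarrow> logsig t y \<le> 0 \<Longrightarrow> threshold \<le> t"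
    using t0 least by auto
qed

lemma logsig_pos_below_threshold: "0 \<le> t \<Longrightarrow> t < threshold \<Longrightarrow> 0 < logsig t y"
  by (meson not_less leD threshold_le)

lemma threshold_pos: "0 < threshold"
  using threshold_nonneg logsig_threshold_nonpos logsig_0_pos
  by (metis order.not_eq_order_implies_strict leD)

lemma logsig_threshold_nonneg: "0 \<le> logsig threshold y"
proof -
  have "isCont (\<lambda>t. logsig t y) threshold"
    unfolding logsig_def by (intro continuous_intros)
  then have "((\<lambda>t. logsig t y) \<longlongrightarrow> logsig threshold y) (at_left threshold)"
    by (simp add: isCont_def filterlim_at_split)
  moreover have "eventually (\<lambda>t. 0 \<le> logsig t y) (at_left threshold)"
    using eventually_at_left_real[OF threshold_pos]
    by eventually_elim (auto intro: less_imp_le logsig_pos_below_threshold)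
  ultimately show ?thesis
    by (rule tendsto_lowerbound) simp
qed

lemma logsig_threshold_zero: "\<exists>y. logsig threshold y = 0"
  using logsig_threshold_nonpos logsig_threshold_nonneg by (meson order_antisym)

lemma logsig_nonneg_iff_le_threshold:
  assumes "0 \<le> t"
  shows "(\<forall>y. 0 \<le> logsig t y) \<longleftrightarrow> t \<le> threshold"
proof
  assume nonneg: "\<forall>y. 0 \<le> logsig t y"
  show "t \<le> threshold"
  proof (rule ccontr)
    assume "\<not> t \<le> threshold"
    obtain y where "logsig threshold y = 0" using logsig_threshold_zero by blast
    then have "logsig t y < 0"
      using logsig_strict_antimono[OF threshold_nonneg, of t y] \<open>\<not> t \<le> threshold\<close> by simp
    then show False using nonneg by (simp add: not_le[symmetric])
  qed
next
  assume "t \<le> threshold"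
  then show "\<forall>y. 0 \<le> logsig t y"
    using assms logsig_pos_below_threshold logsig_threshold_nonneg
    by (metis order.order_iff_strict less_imp_le)
qed

lemma copositive_iff_le_threshold:
  "0 \<le> t \<Longrightarrow> copositive_on_orthant (signomial Ap Am (star_pow c t h)) \<longleftrightarrow> t \<le> threshold"
  unfolding copositive_on_orthant_def pos_orthant_eq_range_exp_vec
  by (simp add: signomial_star_pow_exp_vec logsig_nonneg_iff_le_threshold)

lemma critical_zero_at_threshold:
  "\<exists>x\<in>pos_orthant. critical_zero Ap Am (star_pow c threshold h) x"
proof -
  obtain y where "logsig threshold y = 0" using logsig_threshold_zero by blast
  then have "critical_zero Ap Am (star_pow c threshold h) (exp_vec y)"
    using copositive_iff_le_threshold[OF threshold_nonneg]
    by (intro critical_zero_at_zero_minimum finite_Ap finite_Am)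
      (auto simp: pos_orthant_eq_range_exp_vec signomial_star_pow_exp_vec)
  then show ?thesis
    unfolding pos_orthant_eq_range_exp_vec by blast
qed

lemma threshold_le_if_zero:
  assumes "0 \<le> t" and "x \<in> pos_orthant" and "signomial Ap Am (star_pow c t h) x = 0"
  shows "threshold \<le> t"
proof -
  obtain y where "x = exp_vec y" using \<open>x \<in> pos_orthant\<close> pos_orthant_eq_range_exp_vec by blast
  then have "logsig t y \<le> 0" using assms(3) signomial_star_pow_exp_vec by simp
  then show ?thesis by (rule threshold_le[OF \<open>0 \<le> t\<close>])
qed

end

theorem corollary2p8:
  fixes Ap Am :: "(int ^ 'n) set" and c :: "int ^ 'n \<Rightarrow> real" and h :: "int ^ 'n \<Rightarrow> int"
  assumes "finite Ap" and "finite Am" and "Ap \<inter> Am = {}"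
    and "Am \<noteq> {}"
    and "real_vec ` Am \<subseteq> rel_interior (convex hull (real_vec ` Ap))"
    and "\<forall>a\<in>Ap \<union> Am. 0 < c a"
    and "\<forall>a\<in>Am. 0 < h a" and "\<forall>a\<in>Ap. h a = 0"
  defines "S \<equiv> {t::real. 0 < t \<and> (\<exists>x\<in>pos_orthant. critical_zero Ap Am (star_pow c t h) x)}"
  shows "\<exists>ts. ts \<in> S \<and> (\<forall>t\<in>S. ts \<le> t) \<and>
           (copositive_on_orthant (signomial Ap Am c) \<longleftrightarrow> 1 \<le> ts)"
proof -
  interpret lifted_signomial Ap Am c h
    using assms by unfold_locales
  have "threshold \<in> S"
    unfolding S_def using threshold_pos critical_zero_at_threshold by blast
  moreover have "\<forall>t\<in>S. threshold \<le> t"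
    unfolding S_def critical_zero_def using threshold_le_if_zero by force
  moreover have "copositive_on_orthant (signomial Ap Am c) \<longleftrightarrow> 1 \<le> threshold"
    using copositive_iff_le_threshold[of 1] by (simp add: star_pow_def)
  ultimately show ?thesis by blast
qed

end
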